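(* Let $\lambda>2$ be such that $\lambda^2$ is an eigenvalue of $-\Delta_D$ with eigenfunction $\psi_\lambda$, let $T>0$, and let $f_\lambda^T$ be the unique solution on $\mathbb{R}$ (distributional sense), decaying as $|z|\to\infty$, of $$(z^2+T^{-2})f''(z)+6zf'(z)+(4-\lambda^2)f(z)=2\pi\,\psi_\lambda(p_D)\,\delta_0(z).$$ Then $f_\lambda^T$ is nonincreasing on $(-\infty,0]$ and nondecreasing on $[0,\infty)$.
   Context: $(D,\omega_D)$ is a compact Riemann surface of genus at least two with $\mathrm{Ric}\,\omega_D=-\omega_D$, $\Delta_D$ its Laplacian, $p_D\in D$ fixed. Eigenfunctions satisfy $\Delta_D\psi_\lambda=-\lambda^2\psi_\lambda$, $\int_D|\psi_\lambda|^2\omega_D=1$, $\psi_\lambda(p_D)\geq0$. $\delta_0$ is the Dirac delta at $0$. *)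

theory Defs
  imports "HOL-Analysis.Analysis"
begin

definition test_function :: "(real \<Rightarrow> real) \<Rightarrow> bool" where
  "test_function \<phi> \<longleftrightarrow>
     (\<forall>k x. ((deriv ^^ k) \<phi>) differentiable (at x)) \<and> bounded {x. \<phi> x \<noteq> 0}"

text \<open>f solves, in the sense of distributions on the real line,
  (z^2 + T^-2) f'' + 6 z f' + (4 - lambda^2) f = 2 pi c delta_0,
  i.e. pairing f against the formal adjoint of the operator applied to any
  test function gives 2 pi c phi(0).\<close>
definition distr_solution :: "real \<Rightarrow> real \<Rightarrow> real \<Rightarrow> (real \<Rightarrow> real) \<Rightarrow> bool" where
  "distr_solution lam T c f \<longleftrightarrow>
     (\<forall>\<phi>. test_function \<phi> \<longrightarrow>
        (let Lphi = (\<lambda>z. deriv (deriv (\<lambda>x. (x\<^sup>2 + 1 / T\<^sup>2) * \<phi> x)) z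
                     - deriv (\<lambda>x. 6 * x * \<phi> x) z
                     + (4 - lam\<^sup>2) * \<phi> z)
         in integrable lborel (\<lambda>z. f z * Lphi z) \<and>
            (\<integral>z. f z * Lphi z \<partial>lborel) = 2 * pi * c * \<phi> 0))"

end

theory Submission
  imports Defs "HOL-Computational_Algebra.Polynomial"
begin

(* Integrating the equation twice against test functions (du Bois-Reymond lemma) gives
     (z^2 + T^-2) f z = alpha + beta z + pi c |z| - int_0^z 2 s f s ds + lam^2 int_0^z int_0^t f
   for constants alpha, beta.  So f is C^1 on each half line, and at a critical point z /= 0
   it satisfies (z^2 + T^-2) f'' z = (lam^2 - 4) f z.  As lam > 2, f has neither a positive local
   maximum nor a negative local minimum off the origin; at the origin the source (c >= 0) makes a
   convex kink, which excludes a positive maximum there as well.  Since f vanishes at infinity,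
   f <= 0, and a failure of monotonicity on either half line would produce a negative local
   minimum off the origin. *)

section \<open>Smooth functions and test functions\<close>

definition smooth :: "(real \<Rightarrow> real) \<Rightarrow> bool" where
  "smooth \<phi> \<longleftrightarrow> (\<forall>k x. ((deriv ^^ k) \<phi>) differentiable (at x))"

lemma test_function_iff: "test_function \<phi> \<longleftrightarrow> smooth \<phi> \<and> bounded {x. \<phi> x \<noteq> 0}"
  by (simp add: test_function_def smooth_def)

lemma smooth_differentiable: "smooth \<phi> \<Longrightarrow> \<phi> differentiable (at x)"
  unfolding smooth_def by (metis funpow_0)

lemma smooth_deriv: "smooth \<phi> \<Longrightarrow> smooth (deriv \<phi>)"
  unfolding smooth_def by (metis funpow_Suc_right o_apply)

lemma smooth_has_real_derivative: "smooth \<phi> \<Longrightarrow> (\<phi> has_real_derivative deriv \<phi> x) (at x)"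
  using smooth_differentiable DERIV_deriv_iff_real_differentiable by blast

lemma smooth_continuous_on: "smooth \<phi> \<Longrightarrow> continuous_on S \<phi>"
  by (meson continuous_at_imp_continuous_on differentiable_imp_continuous_within smooth_differentiable)

lemma higher_deriv_affine_comp:
  assumes "smooth \<phi>"
  shows "(deriv ^^ k) (\<lambda>y. \<phi> (a * y + b)) = (\<lambda>y. a ^ k * (deriv ^^ k) \<phi> (a * y + b))"
proof (induction k)
  case 0
  then show ?case by simp
next
  case (Suc k)
  have "((\<lambda>y. a ^ k * (deriv ^^ k) \<phi> (a * y + b)) has_real_derivative
         a ^ Suc k * (deriv ^^ Suc k) \<phi> (a * y + b)) (at y)" for y
  proof -
    have "((deriv ^^ k) \<phi> has_real_derivative (deriv ^^ Suc k) \<phi> (a * y + b)) (at (a * y + b))"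
      using assms by (simp add: smooth_def DERIV_deriv_iff_real_differentiable)
    then have "((\<lambda>y. a ^ k * (deriv ^^ k) \<phi> (a * y + b)) has_real_derivative
         a ^ k * ((deriv ^^ Suc k) \<phi> (a * y + b) * a)) (at y)"
      by (intro DERIV_cmult DERIV_chain2[where g = "\<lambda>y. a * y + b"]) (auto intro!: derivative_eq_intros)
    then show ?thesis
      by (simp add: algebra_simps)
  qed
  then show ?case
    using Suc DERIV_imp_deriv by fastforce
qed

lemma smooth_affine_comp:
  assumes "smooth \<phi>"
  shows "smooth (\<lambda>y. \<phi> (a * y + b))"
  unfolding smooth_def higher_deriv_affine_comp[OF assms]
proof (intro allI)
  fix k x
  have "((deriv ^^ k) \<phi>) \<circ> (\<lambda>y. a * y + b) differentiable (at x)"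
    using assms unfolding smooth_def by (intro differentiable_chain_at) auto
  then show "(\<lambda>y. a ^ k * (deriv ^^ k) \<phi> (a * y + b)) differentiable (at x)"
    by (auto intro: differentiable_mult simp: o_def)
qed

lemma higher_deriv_lincomb:
  assumes "smooth f" "smooth g"
  shows "(deriv ^^ k) (\<lambda>x. a * f x + b * g x) = (\<lambda>x. a * (deriv ^^ k) f x + b * (deriv ^^ k) g x)"
proof (induction k)
  case 0
  then show ?case by simp
next
  case (Suc k)
  have "((\<lambda>x. a * (deriv ^^ k) f x + b * (deriv ^^ k) g x) has_real_derivative
         a * (deriv ^^ Suc k) f x + b * (deriv ^^ Suc k) g x) (at x)" for x
    using assms unfolding smooth_def
    by (auto intro!: derivative_eq_intros simp: DERIV_deriv_iff_real_differentiable[symmetric])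
  then show ?case
    using Suc DERIV_imp_deriv by fastforce
qed

lemma smooth_lincomb: "smooth f \<Longrightarrow> smooth g \<Longrightarrow> smooth (\<lambda>x. a * f x + b * g x)"
  unfolding smooth_def higher_deriv_lincomb[unfolded smooth_def]
  by (auto intro!: differentiable_add differentiable_mult)

lemma test_function_lincomb:
  assumes "test_function f" "test_function g"
  shows "test_function (\<lambda>x. a * f x + b * g x)"
proof -
  have "{x. a * f x + b * g x \<noteq> 0} \<subseteq> {x. f x \<noteq> 0} \<union> {x. g x \<noteq> 0}"
    by auto
  then show ?thesis
    using assms smooth_lincomb unfolding test_function_iff by (meson bounded_Un bounded_subset)
qed

lemma test_function_vanishes_outside:
  assumes "test_function \<phi>"
  obtains R where "R > 0" "\<And>k x. \<bar>x\<bar> \<ge> R \<Longrightarrow> (deriv ^^ k) \<phi> x = 0"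
proof -
  obtain B where B: "\<And>x. \<phi> x \<noteq> 0 \<Longrightarrow> \<bar>x\<bar> \<le> B"
    using assms unfolding test_function_def bounded_iff by auto
  have "(deriv ^^ k) \<phi> x = 0" if "\<bar>x\<bar> > \<bar>B\<bar>" for k x
    using that
  proof (induction k arbitrary: x)
    case 0
    then show ?case using B by force
  next
    case (Suc k)
    have "((deriv ^^ k) \<phi> has_real_derivative 0) (at x)"
    proof (rule has_field_derivative_transform_within_open[of "\<lambda>_. 0" _ _ "{y. \<bar>y\<bar> > \<bar>B\<bar>}"])
      show "open {y::real. \<bar>y\<bar> > \<bar>B\<bar>}"
        by (intro open_Collect_less continuous_intros)
    qed (use Suc in auto)
    then show ?case
      by (simp add: DERIV_imp_deriv)
  qed
  then show ?thesis
    using that[of "\<bar>B\<bar> + 1"] by auto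
qed

lemma test_function_deriv:
  assumes "test_function \<phi>"
  shows "test_function (deriv \<phi>)"
proof -
  obtain R where R: "\<And>k x. \<bar>x\<bar> \<ge> R \<Longrightarrow> (deriv ^^ k) \<phi> x = 0"
    using test_function_vanishes_outside[OF assms] by blast
  have "{x. deriv \<phi> x \<noteq> 0} \<subseteq> cball 0 R"
    using R[of _ 1] by (force simp: dist_real_def)
  then show ?thesis
    using assms smooth_deriv bounded_subset[OF bounded_cball] unfolding test_function_iff by blast
qed

lemma test_function_continuous_on: "test_function \<phi> \<Longrightarrow> continuous_on S \<phi>"
  by (simp add: test_function_iff smooth_continuous_on)

lemma test_function_isCont: "test_function \<phi> \<Longrightarrow> isCont \<phi> x"
  by (simp add: test_function_iff smooth_differentiable differentiable_imp_continuous_within)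

section \<open>A smooth bump function\<close>

lemma exp_ge_power_div_fact:
  fixes s :: real
  assumes "0 \<le> s"
  shows "s ^ k / fact k \<le> exp s"
proof -
  have "sum (\<lambda>n. s ^ n /\<^sub>R fact n) {k} \<le> suminf (\<lambda>n. s ^ n /\<^sub>R fact n)"
    using summable_exp_generic[of s] assms by (intro sum_le_suminf) auto
  then show ?thesis
    by (simp add: exp_def divide_inverse mult.commute)
qed

lemma power_mult_exp_minus_le:
  fixes v :: real
  assumes "0 < v"
  shows "v ^ n * exp (- v) \<le> fact (n + 2) / v\<^sup>2"
proof -
  have "v ^ n * exp (- v) = v ^ n / exp v"
    by (simp add: exp_minus field_simps)
  also have "\<dots> \<le> v ^ n / (v ^ (n + 2) / fact (n + 2))"
    using exp_ge_power_div_fact[of v "n + 2"] assms by (intro divide_left_mono) auto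
  also have "\<dots> = fact (n + 2) / v\<^sup>2"
    using assms by (simp add: field_simps power_add power2_eq_square)
  finally show ?thesis .
qed

lemma has_real_derivative_zero_if_square_bound:
  fixes g :: "real \<Rightarrow> real"
  assumes bound: "\<And>y. \<bar>g y\<bar> \<le> C * (y - x)\<^sup>2"
  shows "(g has_real_derivative 0) (at x)"
proof -
  have gx: "g x = 0"
    using bound[of x] by simp
  have "((\<lambda>y. (g y - g x) / (y - x)) \<longlongrightarrow> 0) (at x)"
  proof (rule Lim_null_comparison)
    have "norm ((g y - g x) / (y - x)) \<le> C * \<bar>y - x\<bar>" if "y \<noteq> x" for y
    proof -
      have "\<bar>g y\<bar> \<le> C * \<bar>y - x\<bar> * \<bar>y - x\<bar>"
        using bound[of y] by (simp add: power2_eq_square mult.assoc)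
      then show ?thesis
        using that gx by (simp add: divide_le_eq)
    qed
    then show "\<forall>\<^sub>F y in at x. norm ((g y - g x) / (y - x)) \<le> C * \<bar>y - x\<bar>"
      by (auto simp: eventually_at_filter)
    show "((\<lambda>y. C * \<bar>y - x\<bar>) \<longlongrightarrow> 0) (at x)"
      by (rule tendsto_eq_intros) (auto intro!: tendsto_eq_intros)
  qed
  then show ?thesis
    by (simp add: has_field_derivative_iff)
qed

definition bump_recip :: "real \<Rightarrow> real" where
  "bump_recip x = 1 / (1 - x\<^sup>2)"

text \<open>Every derivative of the standard bump \<open>exp (- 1 / (1 - x\<^sup>2))\<close> has the form
  \<open>poly_bump P n\<close>.\<close>

definition poly_bump :: "real poly \<Rightarrow> nat \<Rightarrow> real \<Rightarrow> real" where
  "poly_bump P n x =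
     (if x\<^sup>2 < 1 then poly P x * bump_recip x ^ n * exp (- bump_recip x) else 0)"

definition poly_bump_deriv :: "real poly \<Rightarrow> nat \<Rightarrow> real poly" where
  "poly_bump_deriv P n = pderiv P * [:1, 0, -1:]\<^sup>2
     + smult (2 * real n) ([:0, 1:] * P * [:1, 0, -1:]) - smult 2 ([:0, 1:] * P)"

lemma bump_recip_has_derivative:
  assumes "x\<^sup>2 < 1"
  shows "(bump_recip has_real_derivative 2 * x * bump_recip x ^ 2) (at x)"
proof -
  have "1 - x\<^sup>2 \<noteq> 0"
    using assms by simp
  then have "((\<lambda>y. 1 / (1 - y\<^sup>2)) has_real_derivative - (- (2 * x)) / (1 - x\<^sup>2)\<^sup>2) (at x)"
    by (auto intro!: derivative_eq_intros simp: power2_eq_square)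
  then show ?thesis
    unfolding bump_recip_def[abs_def] by (simp add: power_divide power2_eq_square)
qed

lemma poly_bump_inner_has_derivative:
  assumes x: "x\<^sup>2 < 1"
  shows "((\<lambda>y. poly P y * bump_recip y ^ n * exp (- bump_recip y)) has_real_derivative
          poly (poly_bump_deriv P n) x * bump_recip x ^ (n + 2) * exp (- bump_recip x)) (at x)"
proof -
  define v where "v = bump_recip x"
  define w where "w = 1 - x\<^sup>2"
  have vw: "v * w = 1"
    using x by (simp add: v_def w_def bump_recip_def)
  have "((\<lambda>y. poly P y * bump_recip y ^ n * exp (- bump_recip y)) has_real_derivative
     poly (pderiv P) x * v ^ n * exp (- v) + poly P x * (real n * v ^ (n - 1) * (2 * x * v\<^sup>2)) * exp (- v)
     + poly P x * v ^ n * (exp (- v) * (- (2 * x * v\<^sup>2)))) (at x)"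
    unfolding v_def
    by (auto intro!: derivative_eq_intros bump_recip_has_derivative[OF x]
        DERIV_power[OF bump_recip_has_derivative[OF x]] simp: algebra_simps)
  also have "poly P x * (real n * v ^ (n - 1) * (2 * x * v\<^sup>2)) = 2 * real n * x * poly P x * v ^ (n + 1)"
    by (cases n) (simp_all add: power2_eq_square algebra_simps)
  also have "poly (pderiv P) x * v ^ n * exp (- v) + 2 * real n * x * poly P x * v ^ (n + 1) * exp (- v)
      + poly P x * v ^ n * (exp (- v) * (- (2 * x * v\<^sup>2)))
    = (poly (pderiv P) x * (v * w)\<^sup>2 * v ^ n + 2 * real n * x * poly P x * (v * w) * v ^ (n + 1)
       - 2 * x * poly P x * v ^ (n + 2)) * exp (- v)"
    by (simp add: vw algebra_simps power_add power2_eq_square)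
  also have "\<dots> = poly (poly_bump_deriv P n) x * v ^ (n + 2) * exp (- v)"
    by (simp add: poly_bump_deriv_def w_def algebra_simps power2_eq_square power_add)
  finally show ?thesis
    by (simp add: v_def)
qed

lemma one_minus_square_le:
  fixes x y :: real
  assumes "x\<^sup>2 = 1" "y \<in> {-1..1}"
  shows "1 - y\<^sup>2 \<le> 2 * \<bar>y - x\<bar>"
proof -
  have "\<bar>x + y\<bar> \<le> 2"
    using assms by (auto simp: power2_eq_1_iff)
  have "1 - y\<^sup>2 \<le> \<bar>y - x\<bar> * \<bar>x + y\<bar>"
    using assms(1) by (simp add: power2_eq_square algebra_simps abs_mult[symmetric])
  also have "\<dots> \<le> 2 * \<bar>y - x\<bar>"
    using \<open>\<bar>x + y\<bar> \<le> 2\<close> by (subst mult.commute) (intro mult_right_mono; simp)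
  finally show ?thesis .
qed

lemma poly_bump_square_bound:
  assumes "x\<^sup>2 = 1"
  obtains C where "\<And>y. \<bar>poly_bump P n y\<bar> \<le> C * (y - x)\<^sup>2"
proof -
  obtain M where M: "\<And>y. y \<in> {-1..1} \<Longrightarrow> \<bar>poly P y\<bar> \<le> M"
    using compact_imp_bounded[OF compact_continuous_image[of "{-1..1::real}" "poly P"]]
    by (force simp: bounded_iff intro: continuous_on_poly continuous_on_id)
  have "\<bar>poly_bump P n y\<bar> \<le> 4 * M * fact (n + 2) * (y - x)\<^sup>2" for y
  proof (cases "y\<^sup>2 < 1")
    case False
    then have "poly_bump P n y = 0"
      by (simp add: poly_bump_def)
    moreover have "0 \<le> M"
      using M[of 0] by simp
    ultimately show ?thesis
      by simp
  next
    case True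
    define v where "v = bump_recip y"
    have w: "0 < 1 - y\<^sup>2"
      using True by simp
    have v: "0 < v" "v = 1 / (1 - y\<^sup>2)"
      using w by (auto simp: v_def bump_recip_def)
    have y: "y \<in> {-1..1}"
      using True by (auto simp: abs_square_less_1 abs_le_iff)
    have "\<bar>poly_bump P n y\<bar> = \<bar>poly P y\<bar> * (v ^ n * exp (- v))"
      using True v by (simp add: poly_bump_def v_def abs_mult)
    also have "\<dots> \<le> M * (fact (n + 2) / v\<^sup>2)"
      using M[OF y] power_mult_exp_minus_le[OF v(1), of n] v(1)
      by (intro mult_mono) auto
    also have "\<dots> = M * fact (n + 2) * (1 - y\<^sup>2)\<^sup>2"
      using w by (simp add: v(2) power_divide)
    also have "\<dots> \<le> M * fact (n + 2) * (2 * \<bar>y - x\<bar>)\<^sup>2"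
      using M[OF y] w one_minus_square_le[OF assms y] by (intro mult_left_mono power_mono) auto
    finally show ?thesis
      by (simp add: power_mult_distrib)
  qed
  then show ?thesis
    using that by blast
qed

lemma poly_bump_has_derivative:
  "(poly_bump P n has_real_derivative poly_bump (poly_bump_deriv P n) (n + 2) x) (at x)"
proof -
  consider "x\<^sup>2 < 1" | "x\<^sup>2 > 1" | "x\<^sup>2 = 1"
    by linarith
  then show ?thesis
  proof cases
    case 1
    then have inside: "poly_bump (poly_bump_deriv P n) (n + 2) x
        = poly (poly_bump_deriv P n) x * bump_recip x ^ (n + 2) * exp (- bump_recip x)"
      by (simp add: poly_bump_def)
    show ?thesis
      unfolding inside
    proof (rule has_field_derivative_transform_within_open[OF poly_bump_inner_has_derivative[OF 1]])
      show "open {y::real. y\<^sup>2 < 1}"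
        by (intro open_Collect_less continuous_intros)
    qed (use 1 in \<open>auto simp: poly_bump_def\<close>)
  next
    case 2
    have "((\<lambda>_. 0) has_real_derivative 0) (at x)"
      by simp
    then have "(poly_bump P n has_real_derivative 0) (at x)"
    proof (rule has_field_derivative_transform_within_open[of _ _ _ "{y. y\<^sup>2 > 1}"])
      show "open {y::real. y\<^sup>2 > 1}"
        by (intro open_Collect_less continuous_intros)
    qed (use 2 in \<open>auto simp: poly_bump_def\<close>)
    then show ?thesis
      using 2 by (simp add: poly_bump_def)
  next
    case 3
    obtain C where "\<And>y. \<bar>poly_bump P n y\<bar> \<le> C * (y - x)\<^sup>2"
      using poly_bump_square_bound[OF 3] by blast
    then have "(poly_bump P n has_real_derivative 0) (at x)"
      by (rule has_real_derivative_zero_if_square_bound)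
    then show ?thesis
      using 3 by (simp add: poly_bump_def)
  qed
qed

lemma deriv_poly_bump: "deriv (poly_bump P n) = poly_bump (poly_bump_deriv P n) (n + 2)"
  using poly_bump_has_derivative DERIV_imp_deriv by blast

lemma smooth_poly_bump: "smooth (poly_bump P n)"
proof -
  have "\<exists>Q m. (deriv ^^ k) (poly_bump P n) = poly_bump Q m" for k
  proof (induction k arbitrary: P n)
    case 0
    then show ?case by auto
  next
    case (Suc k)
    then show ?case
      by (metis funpow_Suc_right o_apply deriv_poly_bump)
  qed
  then show ?thesis
    unfolding smooth_def by (metis poly_bump_has_derivative real_differentiable_def)
qed

definition bump :: "real \<Rightarrow> real \<Rightarrow> real \<Rightarrow> real" where
  "bump x0 e y = poly_bump 1 0 ((y - x0) / e)"

lemma bump_nonneg: "bump x0 e y \<ge> 0"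
  by (simp add: bump_def poly_bump_def)

lemma bump_eq_0:
  assumes "e > 0" "\<bar>y - x0\<bar> \<ge> e"
  shows "bump x0 e y = 0"
proof -
  have "1 \<le> \<bar>(y - x0) / e\<bar>"
    using assms by (simp add: le_divide_eq)
  then show ?thesis
    by (simp add: bump_def poly_bump_def abs_square_less_1)
qed

lemma bump_center_pos: "bump x0 e x0 > 0"
  by (simp add: bump_def poly_bump_def)

lemma test_function_bump:
  assumes "e > 0"
  shows "test_function (bump x0 e)"
proof -
  have "bump x0 e = (\<lambda>y. poly_bump 1 0 ((1 / e) * y + (- x0 / e)))"
    by (simp add: bump_def[abs_def] diff_divide_distrib)
  then have "smooth (bump x0 e)"
    using smooth_affine_comp[OF smooth_poly_bump] by metis
  moreover have "{y. bump x0 e y \<noteq> 0} \<subseteq> cball x0 e"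
    using bump_eq_0[OF assms] by (force simp: dist_real_def)
  ultimately show ?thesis
    unfolding test_function_iff using bounded_subset[OF bounded_cball] by blast
qed

lemma integrable_continuous_vanishing_outside:
  fixes h :: "real \<Rightarrow> real"
  assumes "continuous_on UNIV h" "\<And>x. \<bar>x\<bar> \<ge> R \<Longrightarrow> h x = 0"
  shows "integrable lborel h"
proof -
  have "h = (\<lambda>x. h x * indicator {-R..R} x)"
    using assms(2) by (force simp: indicator_def abs_le_iff)
  moreover have "integrable lborel (\<lambda>x. h x * indicator {-R..R} x)"
    using assms(1) by (intro borel_integrable_atLeastAtMost) (simp add: continuous_on_eq_continuous_at)
  ultimately show ?thesis
    by simp
qed

lemma integrable_mult_test_function:
  fixes g :: "real \<Rightarrow> real"
  assumes "continuous_on UNIV g" "test_function \<phi>"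
  shows "integrable lborel (\<lambda>x. g x * \<phi> x)"
proof -
  obtain R where "\<And>x. \<bar>x\<bar> \<ge> R \<Longrightarrow> \<phi> x = 0"
    using test_function_vanishes_outside[OF assms(2)] by (metis funpow_0)
  then show ?thesis
    using continuous_on_mult[OF assms(1) test_function_continuous_on[OF assms(2)]]
    by (intro integrable_continuous_vanishing_outside[of _ R]) auto
qed

lemma integrable_test_function: "test_function \<phi> \<Longrightarrow> integrable lborel \<phi>"
  using integrable_mult_test_function[of "\<lambda>_. 1"] by simp

lemma integral_by_parts_test_function:
  fixes u u' :: "real \<Rightarrow> real"
  assumes u: "\<And>x. (u has_real_derivative u' x) (at x)" and u': "continuous_on UNIV u'"
    and \<phi>: "test_function \<phi>"
  shows "(\<integral>x. u' x * \<phi> x \<partial>lborel) = - (\<integral>x. u x * deriv \<phi> x \<partial>lborel)"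
proof -
  obtain R where R: "R > 0" "\<And>k x. \<bar>x\<bar> \<ge> R \<Longrightarrow> (deriv ^^ k) \<phi> x = 0"
    using test_function_vanishes_outside[OF \<phi>] by blast
  have vanish: "\<phi> x = 0" "deriv \<phi> x = 0" if "\<bar>x\<bar> \<ge> R" for x
    using R(2)[OF that, of 0] R(2)[OF that, of 1] by simp_all
  have restrict: "(\<lambda>x. u' x * \<phi> x) = (\<lambda>x. (u' x * \<phi> x) * indicator {-R..R} x)"
    "(\<lambda>x. u x * deriv \<phi> x) = (\<lambda>x. (u x * deriv \<phi> x) * indicator {-R..R} x)"
    using vanish by (force simp: indicator_def abs_le_iff)+
  have "isCont u' x" "isCont (deriv \<phi>) x" for x
    using u' test_function_isCont[OF test_function_deriv[OF \<phi>]]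
    by (simp_all add: continuous_on_eq_continuous_at)
  then have "(\<integral>x. (u x * deriv \<phi> x) * indicator {-R..R} x \<partial>lborel)
      = u R * \<phi> R - u (-R) * \<phi> (-R) - (\<integral>x. (u' x * \<phi> x) * indicator {-R..R} x \<partial>lborel)"
    using R(1) u \<phi> by (intro integral_by_parts) (auto simp: test_function_iff smooth_has_real_derivative)
  then show ?thesis
    using R(1) vanish[of R] vanish[of "-R"] by (simp add: restrict)
qed

lemma integral_deriv_test_function:
  assumes "test_function \<phi>"
  shows "(\<integral>x. deriv \<phi> x \<partial>lborel) = 0"
proof -
  have "(\<integral>x. 0 * \<phi> x \<partial>lborel) = - (\<integral>x. 1 * deriv \<phi> x \<partial>lborel)"
    using assms by (intro integral_by_parts_test_function) auto
  then show ?thesis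
    by simp
qed

lemma integral_mult_deriv_test_function:
  assumes "test_function \<phi>"
  shows "(\<integral>x. x * deriv \<phi> x \<partial>lborel) = - (\<integral>x. \<phi> x \<partial>lborel)"
proof -
  have "(\<integral>x. 1 * \<phi> x \<partial>lborel) = - (\<integral>x. x * deriv \<phi> x \<partial>lborel)"
    using assms by (intro integral_by_parts_test_function) auto
  then show ?thesis
    by simp
qed

text \<open>Write \<open>\<bar>x\<bar> = 2 max x 0 - x\<close>: the first moment of \<open>\<phi>''\<close> vanishes, and on the
  half line \<open>x \<phi>''\<close> integrates by parts to \<open>\<phi> 0\<close>.\<close>

lemma integral_abs_mult_second_deriv:
  assumes \<phi>: "test_function \<phi>"
  shows "(\<integral>x. \<bar>x\<bar> * deriv (deriv \<phi>) x \<partial>lborel) = 2 * \<phi> 0"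
proof -
  obtain R where R: "R > 0" "\<And>k x. \<bar>x\<bar> \<ge> R \<Longrightarrow> (deriv ^^ k) \<phi> x = 0"
    using test_function_vanishes_outside[OF \<phi>] by blast
  have vanish_R: "\<phi> R = 0" "deriv \<phi> R = 0"
    using R(2)[of R 0] R(2)[of R 1] R(1) by simp_all
  have vanish'': "deriv (deriv \<phi>) x = 0" if "\<bar>x\<bar> \<ge> R" for x
    using R(2)[OF that, of 2] by (simp add: numeral_2_eq_2)
  have \<phi>': "test_function (deriv \<phi>)" and \<phi>'': "test_function (deriv (deriv \<phi>))"
    using \<phi> by (simp_all add: test_function_deriv)
  have cont: "isCont (deriv \<phi>) x" "isCont (deriv (deriv \<phi>)) x" for x
    using \<phi>' \<phi>'' by (simp_all add: test_function_isCont)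
  have has_deriv: "(\<phi> has_real_derivative deriv \<phi> x) (at x)"
      "(deriv \<phi> has_real_derivative deriv (deriv \<phi>) x) (at x)" for x
    using \<phi> \<phi>' by (simp_all add: test_function_iff smooth_has_real_derivative)
  have whole_line: "(\<integral>x. x * deriv (deriv \<phi>) x \<partial>lborel) = 0"
    using \<phi>' by (simp add: integral_mult_deriv_test_function integral_deriv_test_function[OF \<phi>])
  have "(\<integral>x. (x * deriv (deriv \<phi>) x) * indicator {0..R} x \<partial>lborel)
      = R * deriv \<phi> R - 0 * deriv \<phi> 0 - (\<integral>x. (1 * deriv \<phi> x) * indicator {0..R} x \<partial>lborel)"
    using R(1) cont has_deriv by (intro integral_by_parts) (auto intro!: derivative_eq_intros)
  also have "(\<integral>x. (1 * deriv \<phi> x) * indicator {0..R} x \<partial>lborel) = \<phi> R - \<phi> 0"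
    using R(1) cont has_deriv by (simp add: integral_FTC_Icc_real)
  finally have half_line: "(\<integral>x. (x * deriv (deriv \<phi>) x) * indicator {0..R} x \<partial>lborel) = \<phi> 0"
    using vanish_R by simp
  have "(\<lambda>x. \<bar>x\<bar> * deriv (deriv \<phi>) x)
      = (\<lambda>x. 2 * ((x * deriv (deriv \<phi>) x) * indicator {0..R} x) - x * deriv (deriv \<phi>) x)"
    using vanish'' by (force simp: indicator_def)
  moreover have "integrable lborel (\<lambda>x. (x * deriv (deriv \<phi>) x) * indicator {0..R} x)"
    using cont by (intro borel_integrable_atLeastAtMost) (auto intro!: continuous_intros)
  moreover have "integrable lborel (\<lambda>x. x * deriv (deriv \<phi>) x)"
    using \<phi>'' by (intro integrable_mult_test_function) (auto intro!: continuous_intros)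
  ultimately show ?thesis
    using whole_line half_line by simp
qed

lemma integral_pos_if_continuous_nonneg:
  fixes h :: "real \<Rightarrow> real"
  assumes cont: "continuous_on UNIV h" and vanish: "\<And>x. \<bar>x\<bar> \<ge> R \<Longrightarrow> h x = 0"
    and nonneg: "\<And>x. h x \<ge> 0" and pos: "h a > 0"
  shows "(\<integral>x. h x \<partial>lborel) > 0"
proof -
  obtain d where d: "d > 0" "\<And>x. dist x a < d \<Longrightarrow> dist (h x) (h a) < h a / 2"
    using cont pos by (metis continuous_on_eq_continuous_at continuous_at_eps_delta half_gt_zero
        open_UNIV UNIV_I)
  have "h a / 2 * indicator {a - d / 2..a + d / 2} x \<le> h x" for x
  proof (cases "x \<in> {a - d / 2..a + d / 2}")
    case True
    then have "\<bar>x - a\<bar> < d"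
      using d(1) by auto
    then have "\<bar>h x - h a\<bar> < h a / 2"
      using d(2) by (simp add: dist_real_def)
    then have "h x > h a / 2"
      by linarith
    then show ?thesis
      using True by simp
  next
    case False
    then show ?thesis
      using nonneg by simp
  qed
  moreover have "integrable lborel (\<lambda>x. h a / 2 * indicator {a - d / 2..a + d / 2} x)"
    using d(1) by (intro integrable_mult_right integrable_real_indicator) auto
  ultimately have "(\<integral>x. h a / 2 * indicator {a - d / 2..a + d / 2} x \<partial>lborel) \<le> (\<integral>x. h x \<partial>lborel)"
    using integrable_continuous_vanishing_outside[OF cont vanish] by (intro integral_mono)
  moreover have "(\<integral>x. h a / 2 * indicator {a - d / 2..a + d / 2} x \<partial>lborel) = h a / 2 * d"
    using d(1) by simp
  moreover have "h a / 2 * d > 0"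
    using pos d(1) by simp
  ultimately show ?thesis
    by linarith
qed

lemma continuous_eq_zero_if_test_integrals_zero:
  fixes g :: "real \<Rightarrow> real"
  assumes cont: "continuous_on UNIV g"
    and zero: "\<And>\<psi>. test_function \<psi> \<Longrightarrow> (\<integral>x. g x * \<psi> x \<partial>lborel) = 0"
  shows "g x0 = 0"
proof (rule ccontr)
  assume "g x0 \<noteq> 0"
  define s where "s = sgn (g x0)"
  have pos: "s * g x0 > 0"
    using \<open>g x0 \<noteq> 0\<close> by (simp add: s_def sgn_real_def)
  have "isCont (\<lambda>x. s * g x) x0"
    using cont by (simp add: continuous_on_eq_continuous_at)
  then have "\<exists>e>0. \<forall>x. dist x x0 < e \<longrightarrow> dist (s * g x) (s * g x0) < s * g x0"
    using pos unfolding continuous_at_eps_delta by blast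
  then obtain e where e: "e > 0" "\<And>x. dist x x0 < e \<Longrightarrow> dist (s * g x) (s * g x0) < s * g x0"
    by blast
  have "s * g x * bump x0 e x \<ge> 0" for x
  proof (cases "\<bar>x - x0\<bar> < e")
    case True
    then have "\<bar>s * g x - s * g x0\<bar> < s * g x0"
      using e(2)[of x] by (simp add: dist_real_def)
    then show ?thesis
      using bump_nonneg[of x0 e x] by simp
  next
    case False
    then show ?thesis
      using bump_eq_0[OF e(1), of x x0] by simp
  qed
  moreover have "s * g x * bump x0 e x = 0" if "\<bar>x\<bar> \<ge> \<bar>x0\<bar> + e" for x
    using bump_eq_0[OF e(1), of x x0] that by simp
  moreover have "continuous_on UNIV (\<lambda>x. s * g x * bump x0 e x)"
    using test_function_continuous_on[OF test_function_bump[OF e(1)]] cont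
    by (intro continuous_intros)
  ultimately have "(\<integral>x. s * g x * bump x0 e x \<partial>lborel) > 0"
    using pos bump_center_pos[of x0 e]
    by (intro integral_pos_if_continuous_nonneg[where R = "\<bar>x0\<bar> + e" and a = x0]) auto
  moreover have "(\<integral>x. s * g x * bump x0 e x \<partial>lborel) = s * (\<integral>x. g x * bump x0 e x \<partial>lborel)"
    by (simp add: mult.assoc)
  ultimately show False
    using zero[OF test_function_bump[OF e(1)]] by simp
qed

section \<open>The du Bois-Reymond lemma\<close>

definition primitive :: "(real \<Rightarrow> real) \<Rightarrow> real \<Rightarrow> real \<Rightarrow> real" where
  "primitive g a x = (if a \<le> x then integral {a..x} g else - integral {x..a} g)"

lemma primitive_self [simp]: "primitive g a a = 0"
  by (simp add: primitive_def)

lemma primitive_eq_integral_diff: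
  assumes "continuous_on UNIV g" "l \<le> a" "l \<le> x"
  shows "primitive g a x = integral {l..x} g - integral {l..a} g"
proof -
  have integrable: "g integrable_on {u..v}" for u v
    using assms(1) by (intro integrable_continuous_real) (auto intro: continuous_on_subset)
  show ?thesis
  proof (cases "a \<le> x")
    case True
    then have "integral {l..a} g + integral {a..x} g = integral {l..x} g"
      using assms by (intro Henstock_Kurzweil_Integration.integral_combine integrable) auto
    then show ?thesis
      using True by (simp add: primitive_def)
  next
    case False
    then have "integral {l..x} g + integral {x..a} g = integral {l..a} g"
      using assms by (intro Henstock_Kurzweil_Integration.integral_combine integrable) auto
    then show ?thesis
      using False by (simp add: primitive_def)
  qed
qed

lemma primitive_has_derivative:
  assumes "continuous_on UNIV g"
  shows "(primitive g a has_real_derivative g x) (at x)"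
proof -
  define l where "l = min a x - 1"
  have "((\<lambda>y. integral {l..y} g) has_real_derivative g x) (at x within {l..x + 1})"
    using assms by (intro integral_has_real_derivative) (auto simp: l_def intro: continuous_on_subset)
  moreover have "x \<in> interior {l..x + 1}"
    by (simp add: l_def)
  ultimately have "((\<lambda>y. integral {l..y} g - integral {l..a} g) has_real_derivative g x) (at x)"
    using at_within_interior DERIV_diff[OF _ DERIV_const] by fastforce
  then show ?thesis
  proof (rule has_field_derivative_transform_within_open[of _ _ _ "{l<..}"])
    show "integral {l..y} g - integral {l..a} g = primitive g a y" if "y \<in> {l<..}" for y
      using assms that by (intro primitive_eq_integral_diff[symmetric]) (auto simp: l_def)
  qed (auto simp: l_def)
qed

lemma continuous_on_primitive: "continuous_on UNIV g \<Longrightarrow> continuous_on S (primitive g a)"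
  by (meson DERIV_continuous continuous_at_imp_continuous_on primitive_has_derivative)

lemma smooth_if_has_derivative_smooth:
  assumes "\<And>x. (\<Psi> has_real_derivative \<psi> x) (at x)" "smooth \<psi>"
  shows "smooth \<Psi>"
  unfolding smooth_def
proof (intro allI)
  fix k x
  have "deriv \<Psi> = \<psi>"
    using assms(1) DERIV_imp_deriv by blast
  then show "(deriv ^^ k) \<Psi> differentiable (at x)"
    using assms unfolding smooth_def real_differentiable_def
    by (cases k) (auto simp: funpow_Suc_right simp del: funpow.simps)
qed

lemma antiderivative_test_function:
  assumes \<psi>: "test_function \<psi>" and mean_zero: "(\<integral>x. \<psi> x \<partial>lborel) = 0"
  obtains \<Psi> where "test_function \<Psi>" "deriv \<Psi> = \<psi>"
proof -
  obtain R where R: "R > 0" "\<And>k x. \<bar>x\<bar> \<ge> R \<Longrightarrow> (deriv ^^ k) \<psi> x = 0"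
    using test_function_vanishes_outside[OF \<psi>] by blast
  have vanish: "\<psi> x = 0" if "\<bar>x\<bar> \<ge> R" for x
    using R(2)[OF that, of 0] by simp
  define \<Psi> where "\<Psi> = primitive \<psi> (- R)"
  have has_deriv: "(\<Psi> has_real_derivative \<psi> x) (at x)" for x
    unfolding \<Psi>_def using \<psi> by (intro primitive_has_derivative test_function_continuous_on)
  have FTC: "(\<integral>x. \<psi> x * indicator {a..b} x \<partial>lborel) = \<Psi> b - \<Psi> a" if "a \<le> b" for a b
    using that has_deriv \<psi> by (intro integral_FTC_Icc_real) (auto intro: test_function_isCont)
  have "\<Psi> x = 0" if "\<bar>x\<bar> \<ge> R" for x
  proof (cases "x \<le> - R")
    case True
    have "(\<lambda>y. \<psi> y * indicator {x..-R} y) = (\<lambda>_. 0)"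
      using True vanish by (force simp: indicator_def)
    then show ?thesis
      using FTC[OF True] by (simp add: \<Psi>_def)
  next
    case False
    then have "x \<ge> R" "- R \<le> x"
      using that R(1) by auto
    then have "(\<lambda>y. \<psi> y * indicator {-R..x} y) = \<psi>"
      using vanish by (force simp: indicator_def abs_le_iff)
    then show ?thesis
      using FTC[OF \<open>- R \<le> x\<close>] mean_zero by (simp add: \<Psi>_def)
  qed
  then have "{x. \<Psi> x \<noteq> 0} \<subseteq> cball 0 R"
    by (force simp: dist_real_def)
  moreover have "smooth \<Psi>"
    using \<psi> by (intro smooth_if_has_derivative_smooth[OF has_deriv]) (simp add: test_function_iff)
  moreover have "deriv \<Psi> = \<psi>"
    using has_deriv DERIV_imp_deriv by blast
  ultimately show ?thesis
    using that bounded_subset[OF bounded_cball] unfolding test_function_iff by blast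
qed

lemma second_antiderivative_test_function:
  assumes \<psi>: "test_function \<psi>"
    and moments: "(\<integral>x. \<psi> x \<partial>lborel) = 0" "(\<integral>x. x * \<psi> x \<partial>lborel) = 0"
  obtains \<phi> where "test_function \<phi>" "deriv (deriv \<phi>) = \<psi>"
proof -
  obtain \<Psi> where \<Psi>: "test_function \<Psi>" "deriv \<Psi> = \<psi>"
    using antiderivative_test_function[OF \<psi> moments(1)] by blast
  have "(\<integral>x. \<Psi> x \<partial>lborel) = 0"
    using integral_mult_deriv_test_function[OF \<Psi>(1)] \<Psi>(2) moments(2) by simp
  then obtain \<phi> where "test_function \<phi>" "deriv \<phi> = \<Psi>"
    using antiderivative_test_function[OF \<Psi>(1)] by blast
  then show ?thesis
    using that \<Psi>(2) by blast
qed

text \<open>Subtracting suitable multiples of \<open>\<rho>\<close> and \<open>\<rho>'\<close> kills the zeroth and first moments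
  of a test function; the system is triangular because \<open>\<rho>'\<close> has mean zero.\<close>

lemma moments_of_moment_correction:
  fixes \<rho> \<psi> :: "real \<Rightarrow> real"
  defines "A \<equiv> (\<integral>x. \<psi> x \<partial>lborel) / (\<integral>x. \<rho> x \<partial>lborel)"
  defines "B \<equiv> (A * (\<integral>x. x * \<rho> x \<partial>lborel) - (\<integral>x. x * \<psi> x \<partial>lborel)) / (\<integral>x. \<rho> x \<partial>lborel)"
  assumes \<rho>: "test_function \<rho>" and mean: "(\<integral>x. \<rho> x \<partial>lborel) \<noteq> 0" and \<psi>: "test_function \<psi>"
  shows "(\<integral>x. \<psi> x - A * \<rho> x - B * deriv \<rho> x \<partial>lborel) = 0"
    and "(\<integral>x. x * (\<psi> x - A * \<rho> x - B * deriv \<rho> x) \<partial>lborel) = 0"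
proof -
  have \<rho>': "test_function (deriv \<rho>)"
    using \<rho> by (rule test_function_deriv)
  have split: "(\<integral>x. g x * (\<psi> x - A * \<rho> x - B * deriv \<rho> x) \<partial>lborel)
      = (\<integral>x. g x * \<psi> x \<partial>lborel) - A * (\<integral>x. g x * \<rho> x \<partial>lborel) - B * (\<integral>x. g x * deriv \<rho> x \<partial>lborel)"
    if "continuous_on UNIV g" for g
    using integrable_mult_test_function[OF that \<psi>] integrable_mult_test_function[OF that \<rho>]
      integrable_mult_test_function[OF that \<rho>']
    by (simp add: algebra_simps)
  show "(\<integral>x. \<psi> x - A * \<rho> x - B * deriv \<rho> x \<partial>lborel) = 0"
    using split[of "\<lambda>_. 1"] mean by (simp add: A_def integral_deriv_test_function[OF \<rho>])
  show "(\<integral>x. x * (\<psi> x - A * \<rho> x - B * deriv \<rho> x) \<partial>lborel) = 0"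
    using split[OF continuous_on_id] mean by (simp add: B_def integral_mult_deriv_test_function[OF \<rho>])
qed

lemma integral_mult_eq_moment_correction:
  fixes K \<rho> \<psi> :: "real \<Rightarrow> real"
  defines "A \<equiv> (\<integral>x. \<psi> x \<partial>lborel) / (\<integral>x. \<rho> x \<partial>lborel)"
  defines "B \<equiv> (A * (\<integral>x. x * \<rho> x \<partial>lborel) - (\<integral>x. x * \<psi> x \<partial>lborel)) / (\<integral>x. \<rho> x \<partial>lborel)"
  assumes K: "continuous_on UNIV K"
    and orth: "\<And>\<phi>. test_function \<phi> \<Longrightarrow> (\<integral>x. K x * deriv (deriv \<phi>) x \<partial>lborel) = 0"
    and \<rho>: "test_function \<rho>" and mean: "(\<integral>x. \<rho> x \<partial>lborel) \<noteq> 0" and \<psi>: "test_function \<psi>"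
  shows "(\<integral>x. K x * \<psi> x \<partial>lborel)
    = A * (\<integral>x. K x * \<rho> x \<partial>lborel) + B * (\<integral>x. K x * deriv \<rho> x \<partial>lborel)"
proof -
  have \<rho>': "test_function (deriv \<rho>)"
    using \<rho> by (rule test_function_deriv)
  define \<psi>0 where "\<psi>0 x = \<psi> x - A * \<rho> x - B * deriv \<rho> x" for x
  have "test_function \<psi>0"
    using test_function_lincomb[OF \<psi> test_function_lincomb[OF \<rho> \<rho>'], of 1 "- 1" A B]
    by (simp add: \<psi>0_def[abs_def] algebra_simps)
  moreover have "(\<integral>x. \<psi>0 x \<partial>lborel) = 0" "(\<integral>x. x * \<psi>0 x \<partial>lborel) = 0"
    using moments_of_moment_correction[OF \<rho> mean \<psi>] by (simp_all add: \<psi>0_def A_def B_def)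
  ultimately obtain \<phi> where \<phi>: "test_function \<phi>" "deriv (deriv \<phi>) = \<psi>0"
    using second_antiderivative_test_function by blast
  have "0 = (\<integral>x. K x * \<psi>0 x \<partial>lborel)"
    using orth[OF \<phi>(1)] \<phi>(2) by simp
  also have "\<dots> = (\<integral>x. K x * \<psi> x \<partial>lborel) - A * (\<integral>x. K x * \<rho> x \<partial>lborel)
      - B * (\<integral>x. K x * deriv \<rho> x \<partial>lborel)"
    using integrable_mult_test_function[OF K \<psi>] integrable_mult_test_function[OF K \<rho>]
      integrable_mult_test_function[OF K \<rho>']
    by (simp add: \<psi>0_def algebra_simps)
  finally show ?thesis
    by simp
qed

lemma du_Bois_Reymond_lemma:
  fixes K :: "real \<Rightarrow> real"
  assumes K: "continuous_on UNIV K"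
    and orth: "\<And>\<phi>. test_function \<phi> \<Longrightarrow> (\<integral>x. K x * deriv (deriv \<phi>) x \<partial>lborel) = 0"
  obtains \<alpha> \<beta> where "\<And>x. K x = \<alpha> + \<beta> * x"
proof -
  define \<rho> where "\<rho> = bump 0 1"
  have \<rho>: "test_function \<rho>"
    using test_function_bump[of 1 0] by (simp add: \<rho>_def)
  define m where "m = (\<integral>x. \<rho> x \<partial>lborel)"
  define n where "n = (\<integral>x. x * \<rho> x \<partial>lborel)"
  have "m > 0"
    unfolding m_def \<rho>_def
    using test_function_continuous_on[OF test_function_bump] bump_eq_0[of 1 _ 0]
    by (intro integral_pos_if_continuous_nonneg[where R = 1 and a = 0])
       (auto simp: bump_nonneg bump_center_pos)
  define k where "k = (\<integral>x. K x * \<rho> x \<partial>lborel)"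
  define k' where "k' = (\<integral>x. K x * deriv \<rho> x \<partial>lborel)"
  define \<alpha> where "\<alpha> = k / m + n * k' / m\<^sup>2"
  define \<beta> where "\<beta> = - k' / m"
  have orth_affine: "(\<integral>x. (K x - (\<alpha> + \<beta> * x)) * \<psi> x \<partial>lborel) = 0"
    if \<psi>: "test_function \<psi>" for \<psi>
  proof -
    define I where "I = (\<integral>x. \<psi> x \<partial>lborel)"
    define J where "J = (\<integral>x. x * \<psi> x \<partial>lborel)"
    have "(\<integral>x. K x * \<psi> x \<partial>lborel) = I / m * k + (I / m * n - J) / m * k'"
      using integral_mult_eq_moment_correction[OF K orth \<rho> _ \<psi>] \<open>m > 0\<close>
      by (simp add: I_def J_def m_def n_def k_def k'_def)
    also have "\<dots> = \<alpha> * I + \<beta> * J"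
      using \<open>m > 0\<close> by (simp add: \<alpha>_def \<beta>_def field_simps power2_eq_square)
    finally have "(\<integral>x. K x * \<psi> x \<partial>lborel) = \<alpha> * I + \<beta> * J" .
    moreover have "(\<integral>x. (K x - (\<alpha> + \<beta> * x)) * \<psi> x \<partial>lborel)
        = (\<integral>x. K x * \<psi> x - \<alpha> * \<psi> x - \<beta> * (x * \<psi> x) \<partial>lborel)"
      by (intro Bochner_Integration.integral_cong) (simp_all add: algebra_simps)
    moreover have "\<dots> = (\<integral>x. K x * \<psi> x \<partial>lborel) - \<alpha> * I - \<beta> * J"
      using integrable_mult_test_function[OF K \<psi>] integrable_test_function[OF \<psi>]
        integrable_mult_test_function[OF continuous_on_id \<psi>]
      by (simp add: I_def J_def)
    ultimately show ?thesis
      by simp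
  qed
  have "continuous_on UNIV (\<lambda>x. K x - (\<alpha> + \<beta> * x))"
    using K by (intro continuous_intros)
  then have "K x - (\<alpha> + \<beta> * x) = 0" for x
    using orth_affine by (rule continuous_eq_zero_if_test_integrals_zero)
  then show ?thesis
    using that by simp
qed

section \<open>The equation in integrated form\<close>

lemma distr_solution_integral_eq:
  assumes f: "distr_solution lam T c f" and \<phi>: "test_function \<phi>"
  shows "(\<integral>z. f z * ((z\<^sup>2 + 1 / T\<^sup>2) * deriv (deriv \<phi>) z - 2 * z * deriv \<phi> z - lam\<^sup>2 * \<phi> z) \<partial>lborel)
    = 2 * pi * c * \<phi> 0"
proof -
  have d0: "(\<phi> has_real_derivative deriv \<phi> x) (at x)"
    and d1: "(deriv \<phi> has_real_derivative deriv (deriv \<phi>) x) (at x)" for x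
    using \<phi> test_function_deriv[OF \<phi>] by (simp_all add: test_function_iff smooth_has_real_derivative)
  have e1: "deriv (\<lambda>x. (x\<^sup>2 + a) * \<phi> x) = (\<lambda>x. 2 * x * \<phi> x + (x\<^sup>2 + a) * deriv \<phi> x)" for a
    by (intro ext DERIV_imp_deriv) (auto intro!: derivative_eq_intros d0)
  have e2: "deriv (\<lambda>x. 2 * x * \<phi> x + (x\<^sup>2 + a) * deriv \<phi> x)
      = (\<lambda>x. 2 * \<phi> x + 4 * x * deriv \<phi> x + (x\<^sup>2 + a) * deriv (deriv \<phi>) x)" for a
    by (intro ext DERIV_imp_deriv) (auto intro!: derivative_eq_intros d0 d1 simp: algebra_simps)
  have e3: "deriv (\<lambda>x. 6 * x * \<phi> x) = (\<lambda>x. 6 * \<phi> x + 6 * x * deriv \<phi> x)"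
    by (intro ext DERIV_imp_deriv) (auto intro!: derivative_eq_intros d0 simp: algebra_simps)
  have "(\<integral>z. f z * (deriv (deriv (\<lambda>x. (x\<^sup>2 + 1 / T\<^sup>2) * \<phi> x)) z
      - deriv (\<lambda>x. 6 * x * \<phi> x) z + (4 - lam\<^sup>2) * \<phi> z) \<partial>lborel) = 2 * pi * c * \<phi> 0"
    using f \<phi> unfolding distr_solution_def Let_def by blast
  then show ?thesis
    unfolding e1 e2 e3 by (simp add: algebra_simps)
qed

lemma integral_primitive_mult_deriv:
  assumes "continuous_on UNIV g" "test_function \<phi>"
  shows "(\<integral>x. primitive g a x * deriv \<phi> x \<partial>lborel) = - (\<integral>x. g x * \<phi> x \<partial>lborel)"
  using integral_by_parts_test_function[OF primitive_has_derivative[OF assms(1), of a] assms] by simp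

lemma integral_double_primitive_mult_second_deriv:
  assumes g: "continuous_on UNIV g" and \<phi>: "test_function \<phi>"
  shows "(\<integral>x. primitive (primitive g a) b x * deriv (deriv \<phi>) x \<partial>lborel) = (\<integral>x. g x * \<phi> x \<partial>lborel)"
  using integral_primitive_mult_deriv[OF continuous_on_primitive[OF g] test_function_deriv[OF \<phi>]]
    integral_primitive_mult_deriv[OF g \<phi>] by simp

text \<open>As \<open>\<bar>z\<bar>'' = 2 \<delta>\<^sub>0\<close> (\<open>integral_abs_mult_second_deriv\<close>), the kink \<open>pi c \<bar>z\<bar>\<close> absorbs
  the source \<open>2 pi c \<delta>\<^sub>0\<close>.\<close>

lemma distr_solution_integrated_weak:
  assumes f: "continuous_on UNIV f" and sol: "distr_solution lam T c f" and \<phi>: "test_function \<phi>"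
  shows "(\<integral>z. ((z\<^sup>2 + 1 / T\<^sup>2) * f z + primitive (\<lambda>s. 2 * s * f s) 0 z
      - lam\<^sup>2 * primitive (primitive f 0) 0 z - pi * c * \<bar>z\<bar>) * deriv (deriv \<phi>) z \<partial>lborel) = 0"
    (is "(\<integral>z. ?K z * _ \<partial>lborel) = 0")
proof -
  define a where "a = 1 / T\<^sup>2"
  define G1 where "G1 = primitive (\<lambda>s. 2 * s * f s) 0"
  define G2 where "G2 = primitive (primitive f 0) 0"
  have \<phi>': "test_function (deriv \<phi>)" and \<phi>'': "test_function (deriv (deriv \<phi>))"
    using \<phi> by (simp_all add: test_function_deriv)
  have cont: "continuous_on UNIV (\<lambda>s. 2 * s * f s)" "continuous_on UNIV (\<lambda>z. (z\<^sup>2 + a) * f z)"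
    "continuous_on UNIV G1" "continuous_on UNIV G2"
    using f by (auto simp: G1_def G2_def intro!: continuous_intros continuous_on_primitive)
  have cont_abs: "continuous_on UNIV (\<lambda>z::real. \<bar>z\<bar>)"
    by (rule continuous_on_rabs[OF continuous_on_id])
  have int: "integrable lborel (\<lambda>z. g z * \<eta> z)"
    if "continuous_on UNIV g" "\<eta> \<in> {\<phi>, deriv \<phi>, deriv (deriv \<phi>)}" for g \<eta>
    using that \<phi> \<phi>' \<phi>'' integrable_mult_test_function by blast
  have "(\<integral>z. ?K z * deriv (deriv \<phi>) z \<partial>lborel)
      = (\<integral>z. (z\<^sup>2 + a) * f z * deriv (deriv \<phi>) z + G1 z * deriv (deriv \<phi>) z
          - lam\<^sup>2 * (G2 z * deriv (deriv \<phi>) z) - pi * c * (\<bar>z\<bar> * deriv (deriv \<phi>) z) \<partial>lborel)"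
    by (intro Bochner_Integration.integral_cong) (simp_all add: a_def G1_def G2_def algebra_simps)
  also have "\<dots> = (\<integral>z. (z\<^sup>2 + a) * f z * deriv (deriv \<phi>) z \<partial>lborel)
      + (\<integral>z. G1 z * deriv (deriv \<phi>) z \<partial>lborel) - lam\<^sup>2 * (\<integral>z. G2 z * deriv (deriv \<phi>) z \<partial>lborel)
      - pi * c * (\<integral>z. \<bar>z\<bar> * deriv (deriv \<phi>) z \<partial>lborel)"
    using int[OF cont(2)] int[OF cont(3)] int[OF cont(4)] int[OF cont_abs] by simp
  also have "\<dots> = (\<integral>z. (z\<^sup>2 + a) * f z * deriv (deriv \<phi>) z - 2 * z * f z * deriv \<phi> z
      - lam\<^sup>2 * (f z * \<phi> z) \<partial>lborel) - 2 * pi * c * \<phi> 0"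
    using int[OF cont(2)] int[OF cont(1)] int[OF f]
      integral_primitive_mult_deriv[OF cont(1) \<phi>'] integral_double_primitive_mult_second_deriv[OF f \<phi>]
      integral_abs_mult_second_deriv[OF \<phi>]
    by (simp add: G1_def G2_def)
  also have "\<dots> = (\<integral>z. f z * ((z\<^sup>2 + a) * deriv (deriv \<phi>) z - 2 * z * deriv \<phi> z - lam\<^sup>2 * \<phi> z) \<partial>lborel)
      - 2 * pi * c * \<phi> 0"
    by (intro arg_cong2[where f = minus] Bochner_Integration.integral_cong) (simp_all add: algebra_simps)
  also have "\<dots> = 0"
    using distr_solution_integral_eq[OF sol \<phi>] by (simp add: a_def)
  finally show ?thesis .
qed

lemma distr_solution_integrated:
  assumes f: "continuous_on UNIV f" and sol: "distr_solution lam T c f"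
  obtains \<alpha> \<beta> where "\<And>z. (z\<^sup>2 + 1 / T\<^sup>2) * f z
    = \<alpha> + \<beta> * z + pi * c * \<bar>z\<bar> - primitive (\<lambda>s. 2 * s * f s) 0 z + lam\<^sup>2 * primitive (primitive f 0) 0 z"
proof -
  have "continuous_on UNIV (\<lambda>z. (z\<^sup>2 + 1 / T\<^sup>2) * f z + primitive (\<lambda>s. 2 * s * f s) 0 z
      - lam\<^sup>2 * primitive (primitive f 0) 0 z - pi * c * \<bar>z\<bar>)"
    using f by (intro continuous_intros continuous_on_primitive continuous_on_rabs continuous_on_id)
  then obtain \<alpha> \<beta> where "\<And>z. (z\<^sup>2 + 1 / T\<^sup>2) * f z + primitive (\<lambda>s. 2 * s * f s) 0 z
      - lam\<^sup>2 * primitive (primitive f 0) 0 z - pi * c * \<bar>z\<bar> = \<alpha> + \<beta> * z"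
    using du_Bois_Reymond_lemma distr_solution_integrated_weak[OF f sol] by blast
  then show ?thesis
    using that[of \<alpha> \<beta>] by (simp add: algebra_simps)
qed

section \<open>Maximum principle\<close>

lemma second_deriv_nonpos_at_local_max:
  fixes f f' :: "real \<Rightarrow> real"
  assumes I: "open I" "m \<in> I" and f': "\<And>x. x \<in> I \<Longrightarrow> (f has_real_derivative f' x) (at x)"
    and f'': "(f' has_real_derivative D) (at m)"
    and max: "d > 0" "\<forall>y. \<bar>m - y\<bar> < d \<longrightarrow> f y \<le> f m"
  shows "D \<le> 0"
proof (rule ccontr)
  assume "\<not> D \<le> 0"
  have "f' m = 0"
    using DERIV_local_max[OF f'[OF I(2)] max] .
  obtain d' where d': "d' > 0" "\<And>h. 0 < h \<Longrightarrow> h < d' \<Longrightarrow> f' m < f' (m + h)"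
    using DERIV_pos_inc_right[OF f''] \<open>\<not> D \<le> 0\<close> by auto
  obtain e where e: "e > 0" "ball m e \<subseteq> I"
    using I openE by blast
  define h where "h = min d (min d' e) / 2"
  have h: "0 < h" "h < d" "h < d'" "h < e"
    using max(1) d'(1) e(1) by (auto simp: h_def)
  obtain \<xi> where \<xi>: "m < \<xi>" "\<xi> < m + h" "f (m + h) - f m = (m + h - m) * f' \<xi>"
    using MVT2[of m "m + h" f f'] f' e(2) h by (force simp: dist_real_def)
  have "f' \<xi> > 0"
    using d'(2)[of "\<xi> - m"] \<xi> h \<open>f' m = 0\<close> by auto
  then have "h * f' \<xi> > 0"
    using h(1) by simp
  then have "f (m + h) > f m"
    using \<xi>(3) by simp
  moreover have "f (m + h) \<le> f m"
    using max(2) h by auto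
  ultimately show False
    by simp
qed

lemma deriv_nonpos_if_right_max:
  fixes g :: "real \<Rightarrow> real"
  assumes g: "(g has_real_derivative D) (at x)" and max: "\<And>h. h > 0 \<Longrightarrow> g (x + h) \<le> g x"
  shows "D \<le> 0"
proof (rule ccontr)
  assume "\<not> D \<le> 0"
  then obtain d where "d > 0" "\<forall>h>0. h < d \<longrightarrow> g x < g (x + h)"
    using DERIV_pos_inc_right[OF g] by auto
  then have "g x < g (x + d / 2)"
    by simp
  then show False
    using max[of "d / 2"] \<open>d > 0\<close> by simp
qed

locale integrated_solution =
  fixes f :: "real \<Rightarrow> real" and lam a k \<alpha> \<beta> :: real
  assumes lam: "lam > 2" and a: "a > 0" and k: "k \<ge> 0" and cont: "continuous_on UNIV f"
    and eq: "\<And>z. (z\<^sup>2 + a) * f z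
      = \<alpha> + \<beta> * z + k * \<bar>z\<bar> - primitive (\<lambda>s. 2 * s * f s) 0 z + lam\<^sup>2 * primitive (primitive f 0) 0 z"
begin

definition branch :: "real \<Rightarrow> real \<Rightarrow> real" where
  "branch b z = \<alpha> + b * z - primitive (\<lambda>s. 2 * s * f s) 0 z + lam\<^sup>2 * primitive (primitive f 0) 0 z"

definition slope :: "real \<Rightarrow> real \<Rightarrow> real" where
  "slope b z = (b - 4 * z * f z + lam\<^sup>2 * primitive f 0 z) / (z\<^sup>2 + a)"

lemma weight_pos: "z\<^sup>2 + a > 0"
  using a by (simp add: add_nonneg_pos)

lemma cancel_weight: "X * (z\<^sup>2 + a) / (z\<^sup>2 + a)\<^sup>2 = X / (z\<^sup>2 + a)"
  using weight_pos[of z] by (simp add: power2_eq_square)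

lemma eq_branch_nonneg: "z \<ge> 0 \<Longrightarrow> (z\<^sup>2 + a) * f z = branch (\<beta> + k) z"
  using eq[of z] by (simp add: branch_def algebra_simps)

lemma eq_branch_nonpos: "z \<le> 0 \<Longrightarrow> (z\<^sup>2 + a) * f z = branch (\<beta> - k) z"
  using eq[of z] by (simp add: branch_def algebra_simps)

lemma branch_has_derivative:
  "(branch b has_real_derivative b - 2 * z * f z + lam\<^sup>2 * primitive f 0 z) (at z)"
proof -
  have "continuous_on UNIV (\<lambda>s. 2 * s * f s)"
    using cont by (intro continuous_intros)
  then show ?thesis
    unfolding branch_def[abs_def] using cont
    by (auto intro!: derivative_eq_intros primitive_has_derivative continuous_on_primitive)
qed

lemma branch_quotient_has_derivative:
  "((\<lambda>z. branch b z / (z\<^sup>2 + a)) has_real_derivative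
     ((b - 2 * z * f z + lam\<^sup>2 * primitive f 0 z) * (z\<^sup>2 + a) - branch b z * (2 * z)) / (z\<^sup>2 + a)\<^sup>2) (at z)"
  using weight_pos[of z]
  by (auto intro!: derivative_eq_intros branch_has_derivative simp: power2_eq_square)

lemma eq_branch_quotient: "(z\<^sup>2 + a) * f z = branch b z \<Longrightarrow> f z = branch b z / (z\<^sup>2 + a)"
  using weight_pos[of z] by (simp add: field_simps)

lemma has_derivative_on_branch:
  assumes I: "open I" "m \<in> I" and on_I: "\<And>z. z \<in> I \<Longrightarrow> (z\<^sup>2 + a) * f z = branch b z"
  shows "(f has_real_derivative slope b m) (at m)"
proof (rule has_field_derivative_transform_within_open[OF _ I])
  show "branch b z / (z\<^sup>2 + a) = f z" if "z \<in> I" for z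
    using eq_branch_quotient[OF on_I[OF that]] by simp
  have "(b - 2 * m * f m + lam\<^sup>2 * primitive f 0 m) * (m\<^sup>2 + a) - (m\<^sup>2 + a) * f m * (2 * m)
      = (b - 4 * m * f m + lam\<^sup>2 * primitive f 0 m) * (m\<^sup>2 + a)"
    by (simp add: algebra_simps)
  then have "((b - 2 * m * f m + lam\<^sup>2 * primitive f 0 m) * (m\<^sup>2 + a) - (m\<^sup>2 + a) * f m * (2 * m))
      / (m\<^sup>2 + a)\<^sup>2 = slope b m"
    by (simp add: slope_def cancel_weight)
  then show "((\<lambda>z. branch b z / (z\<^sup>2 + a)) has_real_derivative slope b m) (at m)"
    using branch_quotient_has_derivative[of b m] on_I[OF I(2)] by simp
qed

text \<open>At a critical point the term \<open>- 4 z f' z\<close> of the derivative of the slope drops out,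
  leaving the sign of \<open>f\<close>: this is where \<open>lam > 2\<close> enters.\<close>

lemma slope_has_derivative_at_critical:
  assumes I: "open I" "m \<in> I" and on_I: "\<And>z. z \<in> I \<Longrightarrow> (z\<^sup>2 + a) * f z = branch b z"
    and critical: "slope b m = 0"
  shows "(slope b has_real_derivative (lam\<^sup>2 - 4) * f m / (m\<^sup>2 + a)) (at m)"
proof -
  have f': "(f has_real_derivative 0) (at m)"
    using has_derivative_on_branch[OF I on_I] critical by simp
  have numerator: "b - 4 * m * f m + lam\<^sup>2 * primitive f 0 m = 0"
    using critical weight_pos[of m] by (simp add: slope_def)
  have "(slope b has_real_derivative
      ((- 4 * f m - 4 * m * 0 + lam\<^sup>2 * f m) * (m\<^sup>2 + a)
        - (b - 4 * m * f m + lam\<^sup>2 * primitive f 0 m) * (2 * m)) / (m\<^sup>2 + a)\<^sup>2) (at m)"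
    unfolding slope_def[abs_def] using weight_pos[of m]
    by (auto intro!: derivative_eq_intros f' primitive_has_derivative cont simp: power2_eq_square)
  also have "((- 4 * f m - 4 * m * 0 + lam\<^sup>2 * f m) * (m\<^sup>2 + a)
        - (b - 4 * m * f m + lam\<^sup>2 * primitive f 0 m) * (2 * m)) / (m\<^sup>2 + a)\<^sup>2
      = (lam\<^sup>2 - 4) * f m / (m\<^sup>2 + a)"
    unfolding numerator cancel_weight[symmetric] by (simp add: algebra_simps)
  finally show ?thesis .
qed

lemma local_max_on_branch_nonpos:
  assumes I: "open I" "m \<in> I" and on_I: "\<And>z. z \<in> I \<Longrightarrow> (z\<^sup>2 + a) * f z = branch b z"
    and max: "d > 0" "\<forall>y. \<bar>m - y\<bar> < d \<longrightarrow> f y \<le> f m"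
  shows "f m \<le> 0"
proof -
  have "slope b m = 0"
    using DERIV_local_max[OF has_derivative_on_branch[OF I on_I] max] .
  with I on_I have "(slope b has_real_derivative (lam\<^sup>2 - 4) * f m / (m\<^sup>2 + a)) (at m)"
    by (intro slope_has_derivative_at_critical)
  moreover have "(f has_real_derivative slope b x) (at x)" if "x \<in> I" for x
    using I(1) that on_I by (rule has_derivative_on_branch)
  ultimately have "(lam\<^sup>2 - 4) * f m / (m\<^sup>2 + a) \<le> 0"
    using I max by (intro second_deriv_nonpos_at_local_max)
  moreover have "lam\<^sup>2 > 2\<^sup>2"
    using lam by (intro power_strict_mono) auto
  ultimately show ?thesis
    using weight_pos[of m] by (simp add: divide_le_0_iff mult_le_0_iff)
qed

lemma local_min_on_branch_nonneg:
  assumes I: "open I" "m \<in> I" and on_I: "\<And>z. z \<in> I \<Longrightarrow> (z\<^sup>2 + a) * f z = branch b z"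
    and min: "d > 0" "\<forall>y. \<bar>m - y\<bar> < d \<longrightarrow> f m \<le> f y"
  shows "f m \<ge> 0"
proof -
  have "slope b m = 0"
    using DERIV_local_min[OF has_derivative_on_branch[OF I on_I] min] .
  with I on_I have "(slope b has_real_derivative (lam\<^sup>2 - 4) * f m / (m\<^sup>2 + a)) (at m)"
    by (intro slope_has_derivative_at_critical)
  then have "((\<lambda>x. - slope b x) has_real_derivative - ((lam\<^sup>2 - 4) * f m / (m\<^sup>2 + a))) (at m)"
    by (rule DERIV_minus)
  moreover have "((\<lambda>x. - f x) has_real_derivative - slope b x) (at x)" if "x \<in> I" for x
    using has_derivative_on_branch[OF I(1) that on_I] by (rule DERIV_minus)
  ultimately have "- ((lam\<^sup>2 - 4) * f m / (m\<^sup>2 + a)) \<le> 0"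
    using I min by (intro second_deriv_nonpos_at_local_max[where f = "\<lambda>x. - f x"]) auto
  moreover have "lam\<^sup>2 > 2\<^sup>2"
    using lam by (intro power_strict_mono) auto
  ultimately show ?thesis
    using weight_pos[of m] by (simp add: zero_le_divide_iff zero_le_mult_iff)
qed

lemma local_max_nonpos:
  assumes "m \<noteq> 0" "d > 0" "\<forall>y. \<bar>m - y\<bar> < d \<longrightarrow> f y \<le> f m"
  shows "f m \<le> 0"
proof (cases "m > 0")
  case True
  then show ?thesis
    using assms eq_branch_nonneg by (intro local_max_on_branch_nonpos[of "{0<..}"]) auto
next
  case False
  then show ?thesis
    using assms eq_branch_nonpos by (intro local_max_on_branch_nonpos[of "{..<0}"]) auto
qed

lemma local_min_nonneg:
  assumes "m \<noteq> 0" "d > 0" "\<forall>y. \<bar>m - y\<bar> < d \<longrightarrow> f m \<le> f y"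
  shows "f m \<ge> 0"
proof (cases "m > 0")
  case True
  then show ?thesis
    using assms eq_branch_nonneg by (intro local_min_on_branch_nonneg[of "{0<..}"]) auto
next
  case False
  then show ?thesis
    using assms eq_branch_nonpos by (intro local_min_on_branch_nonneg[of "{..<0}"]) auto
qed

text \<open>A maximum at the origin is excluded by the kink of \<open>f\<close> there: its one-sided slopes
  \<open>(\<beta> + k) / a\<close> and \<open>(\<beta> - k) / a\<close> would have to be \<open>\<le> 0\<close> and \<open>\<ge> 0\<close>, forcing \<open>k = 0\<close>.\<close>

lemma global_max_nonpos:
  assumes max: "\<forall>y. f y \<le> f m"
  shows "f m \<le> 0"
proof (cases "m = 0")
  case False
  then show ?thesis
    using max by (intro local_max_nonpos[of m 1]) auto
next
  case True
  have slope_0: "((\<lambda>z. branch b z / (z\<^sup>2 + a)) has_real_derivative b / a) (at 0)" for b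
    using branch_quotient_has_derivative[of b 0] a by (simp add: branch_def power2_eq_square)
  have "(\<beta> + k) / a \<le> 0"
  proof (rule deriv_nonpos_if_right_max[OF slope_0])
    fix h :: real
    assume "h > 0"
    then show "branch (\<beta> + k) (0 + h) / ((0 + h)\<^sup>2 + a) \<le> branch (\<beta> + k) 0 / (0\<^sup>2 + a)"
      using max[rule_format, of h] True eq_branch_quotient[OF eq_branch_nonneg[of 0]]
        eq_branch_quotient[OF eq_branch_nonneg[of h]] by simp
  qed
  moreover have "- ((\<beta> - k) / a) \<le> 0"
  proof (rule deriv_nonpos_if_right_max)
    show "((\<lambda>z. branch (\<beta> - k) (- z) / ((- z)\<^sup>2 + a)) has_real_derivative - ((\<beta> - k) / a)) (at 0)"
      using DERIV_chain2[OF _ DERIV_minus[OF DERIV_ident], of "\<lambda>z. branch (\<beta> - k) z / (z\<^sup>2 + a)"]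
        slope_0[of "\<beta> - k"] by simp
    fix h :: real
    assume "h > 0"
    then show "branch (\<beta> - k) (- (0 + h)) / ((- (0 + h))\<^sup>2 + a) \<le> branch (\<beta> - k) (- 0) / ((- 0)\<^sup>2 + a)"
      using max[rule_format, of "- h"] True eq_branch_quotient[OF eq_branch_nonpos[of 0]]
        eq_branch_quotient[OF eq_branch_nonpos[of "- h"]] by simp
  qed
  ultimately have "k = 0"
    using a k by (simp add: divide_le_0_iff zero_le_divide_iff)
  then have "(z\<^sup>2 + a) * f z = branch \<beta> z" for z
    using eq_branch_nonneg[of z] eq_branch_nonpos[of z] by (cases "z \<ge> 0") auto
  then show ?thesis
    using max by (intro local_max_on_branch_nonpos[of UNIV m \<beta> 1]) auto
qed

end

section \<open>Monotonicity\<close>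

lemma nonpos_if_global_max_nonpos:
  fixes f :: "real \<Rightarrow> real"
  assumes cont: "continuous_on UNIV f"
    and top: "(f \<longlongrightarrow> 0) at_top" and bot: "(f \<longlongrightarrow> 0) at_bot"
    and max: "\<And>m. \<forall>y. f y \<le> f m \<Longrightarrow> f m \<le> 0"
  shows "f x \<le> 0"
proof (rule ccontr)
  assume "\<not> f x \<le> 0"
  then have pos: "f x > 0"
    by simp
  obtain R1 where R1: "\<And>y. y \<ge> R1 \<Longrightarrow> \<bar>f y\<bar> < f x"
    using tendstoD[OF top pos] by (auto simp: eventually_at_top_linorder dist_real_def)
  obtain R2 where R2: "\<And>y. y \<le> R2 \<Longrightarrow> \<bar>f y\<bar> < f x"
    using tendstoD[OF bot pos] by (auto simp: eventually_at_bot_linorder dist_real_def)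
  define R where "R = \<bar>R1\<bar> + \<bar>R2\<bar> + \<bar>x\<bar>"
  have "\<exists>m\<in>{-R..R}. \<forall>y\<in>{-R..R}. f y \<le> f m"
    by (rule continuous_attains_sup) (auto simp: R_def intro: continuous_on_subset[OF cont])
  then obtain m where m: "m \<in> {-R..R}" "\<And>y. y \<in> {-R..R} \<Longrightarrow> f y \<le> f m"
    by blast
  have "\<bar>x\<bar> \<le> R"
    by (simp add: R_def)
  then have "f x \<le> f m"
    using m(2)[of x] by (simp add: abs_le_iff)
  have "f y \<le> f m" for y
  proof (cases "y \<in> {-R..R}")
    case True
    then show ?thesis
      using m(2) by blast
  next
    case False
    then have "y \<ge> R1 \<or> y \<le> R2"
      by (auto simp: R_def)
    then show ?thesis
      using R1 R2 \<open>f x \<le> f m\<close> by force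
  qed
  then show False
    using max[of m] \<open>f x \<le> f m\<close> pos by simp
qed

lemma nondecreasing_if_local_min_nonneg:
  fixes f :: "real \<Rightarrow> real"
  assumes cont: "continuous_on UNIV f" and top: "(f \<longlongrightarrow> 0) at_top" and nonpos: "\<And>z. f z \<le> 0"
    and min: "\<And>m d. m > 0 \<Longrightarrow> d > 0 \<Longrightarrow> \<forall>y. \<bar>m - y\<bar> < d \<longrightarrow> f m \<le> f y \<Longrightarrow> f m \<ge> 0"
    and xy: "0 \<le> x" "x \<le> y"
  shows "f x \<le> f y"
proof (rule ccontr)
  assume "\<not> f x \<le> f y"
  then have less: "f y < f x"
    by simp
  then have neg: "- f y > 0"
    using nonpos[of x] by simp
  obtain R where R: "\<And>z. z \<ge> R \<Longrightarrow> \<bar>f z\<bar> < - f y"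
    using tendstoD[OF top neg] by (auto simp: eventually_at_top_linorder dist_real_def)
  have "\<exists>m\<in>{x..max R y}. \<forall>z\<in>{x..max R y}. f m \<le> f z"
    using xy by (intro continuous_attains_inf) (auto intro: continuous_on_subset[OF cont])
  then obtain m where m: "m \<in> {x..max R y}" "\<And>z. z \<in> {x..max R y} \<Longrightarrow> f m \<le> f z"
    by blast
  have "f m \<le> f y"
    using m(2)[of y] xy by simp
  then have "m > x"
    using m(1) less by (cases "m = x") auto
  have "f m \<le> f z" if "z \<ge> x" for z
  proof (cases "z \<le> max R y")
    case True
    then show ?thesis
      using m(2) that by simp
  next
    case False
    then have "\<bar>f z\<bar> < - f y"
      using R by simp
    then show ?thesis
      using \<open>f m \<le> f y\<close> by simp
  qed
  then have "f m \<ge> 0"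
    using \<open>m > x\<close> xy by (intro min[of m "m - x"]) auto
  then show False
    using \<open>f m \<le> f y\<close> neg by simp
qed

lemma nonincreasing_if_local_min_nonneg:
  fixes f :: "real \<Rightarrow> real"
  assumes cont: "continuous_on UNIV f" and bot: "(f \<longlongrightarrow> 0) at_bot" and nonpos: "\<And>z. f z \<le> 0"
    and min: "\<And>m d. m < 0 \<Longrightarrow> d > 0 \<Longrightarrow> \<forall>y. \<bar>m - y\<bar> < d \<longrightarrow> f m \<le> f y \<Longrightarrow> f m \<ge> 0"
    and xy: "x \<le> y" "y \<le> 0"
  shows "f y \<le> f x"
proof -
  define g where "g z = f (- z)" for z
  have cont_g: "continuous_on UNIV g"
    unfolding g_def[abs_def]
    by (rule continuous_on_compose2[OF cont continuous_on_minus[OF continuous_on_id]]) simp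
  have top_g: "(g \<longlongrightarrow> 0) at_top"
    using bot by (simp add: g_def[abs_def] filterlim_at_bot_mirror)
  have min_g: "g m \<ge> 0" if "m > 0" "d > 0" "\<forall>y. \<bar>m - y\<bar> < d \<longrightarrow> g m \<le> g y" for m d
  proof -
    have "\<forall>y. \<bar>- m - y\<bar> < d \<longrightarrow> f (- m) \<le> f y"
    proof (intro allI impI)
      fix y
      assume "\<bar>- m - y\<bar> < d"
      then show "f (- m) \<le> f y"
        using that(3)[rule_format, of "- y"] by (simp add: g_def abs_minus_commute add.commute)
    qed
    then show ?thesis
      using that(1,2) min[of "- m" d] by (simp add: g_def)
  qed
  have "g (- y) \<le> g (- x)"
  proof (rule nondecreasing_if_local_min_nonneg[OF cont_g top_g _ min_g])
    show "g z \<le> 0" for z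
      using nonpos by (simp add: g_def)
  qed (use xy in auto)
  then show ?thesis
    by (simp add: g_def)
qed

theorem proposition3p3:
  fixes lam T c :: real and f :: "real \<Rightarrow> real"
  assumes "lam > 2" and "T > 0" and "c \<ge> 0"
    and "continuous_on UNIV f"
    and "distr_solution lam T c f"
    and "(f \<longlongrightarrow> 0) at_top" and "(f \<longlongrightarrow> 0) at_bot"
  shows "(\<forall>x y. x \<le> y \<and> y \<le> 0 \<longrightarrow> f y \<le> f x) \<and>
         (\<forall>x y. 0 \<le> x \<and> x \<le> y \<longrightarrow> f x \<le> f y)"
proof -
  note cont = assms(4) and top = assms(6) and bot = assms(7)
  obtain \<alpha> \<beta> where "\<And>z. (z\<^sup>2 + 1 / T\<^sup>2) * f z = \<alpha> + \<beta> * z + pi * c * \<bar>z\<bar>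
      - primitive (\<lambda>s. 2 * s * f s) 0 z + lam\<^sup>2 * primitive (primitive f 0) 0 z"
    using distr_solution_integrated[OF cont assms(5)] by blast
  then interpret integrated_solution f lam "1 / T\<^sup>2" "pi * c" \<alpha> \<beta>
    using assms by unfold_locales simp_all
  have nonpos: "f z \<le> 0" for z
    using cont top bot global_max_nonpos by (rule nonpos_if_global_max_nonpos)
  have "f x \<le> f y" if "0 \<le> x" "x \<le> y" for x y
    using cont top nonpos local_min_nonneg that by (rule nondecreasing_if_local_min_nonneg) auto
  moreover have "f y \<le> f x" if "x \<le> y" "y \<le> 0" for x y
    using cont bot nonpos local_min_nonneg that by (rule nonincreasing_if_local_min_nonneg) auto
  ultimately show ?thesis
    by blast
qed

end
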